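(* Let $f:\mathbb{N}\to\mathbb{R}$ with $f(1)=1$ be multiplicative (i.e. $f(mn)=f(m)f(n)$ for coprime $m,n$). Assume there exist $A>0$ and $c\in(0,1)$ such that $|f(n)|\leq Ac^n$ for all $n\geq2$. Then $|f^{-1}(n)| \leq n^{\frac{3\ln c}{\ln 3}+\frac{\ln(1+A)}{\ln 2}}$ for all $n\geq2$.
   Context: $f^{-1}$ denotes the Dirichlet inverse of $f$: the arithmetic function with $\sum_{d\mid n} f(n/d) f^{-1}(d)=\varepsilon(n)$ for all $n$, where $\varepsilon(1)=1$ and $\varepsilon(n)=0$ for $n\ge2$. *)

theory Defs
  imports "HOL-Analysis.Analysis"
begin

definition multiplicative_fun :: "(nat \<Rightarrow> real) \<Rightarrow> bool" where
  "multiplicative_fun f \<longleftrightarrow>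
     f 1 = 1 \<and> (\<forall>m n. m > 0 \<longrightarrow> n > 0 \<longrightarrow> coprime m n \<longrightarrow> f (m * n) = f m * f n)"

(* Values at 0 are normalised to 0 so that the function is uniquely determined. *)
definition dirichlet_inverse :: "(nat \<Rightarrow> real) \<Rightarrow> nat \<Rightarrow> real" where
  "dirichlet_inverse f = (THE g. g 0 = 0 \<and>
     (\<forall>n>0. (\<Sum>d | d dvd n. f (n div d) * g d) = (if n = 1 then 1 else 0)))"

end

theory Submission
  imports Defs
begin

(* The Dirichlet inverse g of a multiplicative f is again multiplicative, so it suffices to
   bound g at prime powers. There the recursion g(p^k) = - sum_{i<k} f(p^(k-i)) g(p^i) together
   with |f(p^j)| <= A c^(p^j) <= A c^(j p) gives |g(p^k)| <= ((1+A) c^p)^k by induction on k.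
   Finally n^3 <= 3^n yields c^p <= p^(3 ln c / ln 3), and p >= 2 yields
   1 + A <= p^(ln(1+A) / ln 2). *)

definition dirichlet_conv :: "(nat \<Rightarrow> real) \<Rightarrow> (nat \<Rightarrow> real) \<Rightarrow> nat \<Rightarrow> real" where
  "dirichlet_conv f g n = (\<Sum>d | d dvd n. f (n div d) * g d)"

lemma sum_divisors_eq_self_plus_proper:
  fixes F :: "nat \<Rightarrow> 'a::comm_monoid_add"
  assumes "n > 0"
  shows "(\<Sum>d | d dvd n. F d) = F n + (\<Sum>d | d dvd n \<and> d < n. F d)"
proof -
  have "{d. d dvd n} = insert n {d. d dvd n \<and> d < n}"
    using assms by (auto dest: dvd_imp_le)
  moreover have "finite {d. d dvd n \<and> d < n}" by simp
  ultimately show ?thesis by simp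
qed

lemma dirichlet_conv_eq_iff:
  assumes "f 1 = 1" and "n > 0"
  shows "dirichlet_conv f g n = e \<longleftrightarrow>
    g n = e - (\<Sum>d | d dvd n \<and> d < n. f (n div d) * g d)"
  using sum_divisors_eq_self_plus_proper[OF assms(2), of "\<lambda>d. f (n div d) * g d"] assms
  by (auto simp: dirichlet_conv_def)

function dirichlet_inverse_rec :: "(nat \<Rightarrow> real) \<Rightarrow> nat \<Rightarrow> real" where
  "dirichlet_inverse_rec f n = (if n = 0 then 0 else (if n = 1 then 1 else 0) -
     (\<Sum>d | d dvd n \<and> d < n. f (n div d) * dirichlet_inverse_rec f d))"
  by auto
termination by (relation "Wellfounded.measure snd") auto

declare dirichlet_inverse_rec.simps [simp del]

lemma dirichlet_inverse_unique:
  assumes "f 1 = 1"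
    and g: "\<And>n. n > 0 \<Longrightarrow> dirichlet_conv f g n = (if n = 1 then 1 else 0)"
    and h: "\<And>n. n > 0 \<Longrightarrow> dirichlet_conv f h n = (if n = 1 then 1 else 0)"
    and "n > 0"
  shows "g n = h n"
  using \<open>n > 0\<close>
proof (induction n rule: less_induct)
  case (less n)
  have "(\<Sum>d | d dvd n \<and> d < n. f (n div d) * g d) =
      (\<Sum>d | d dvd n \<and> d < n. f (n div d) * h d)"
    using less by (intro sum.cong) (auto intro: Nat.gr0I)
  then show ?case
    using g[OF less.prems] h[OF less.prems]
    by (simp add: dirichlet_conv_eq_iff[where f = f, OF assms(1) less.prems])
qed

lemma dirichlet_inverse_eq_rec:
  assumes "f 1 = 1"
  shows "dirichlet_inverse f = dirichlet_inverse_rec f"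
  unfolding dirichlet_inverse_def dirichlet_conv_def[symmetric]
proof (rule the_equality)
  have rec: "dirichlet_conv f (dirichlet_inverse_rec f) n = (if n = 1 then 1 else 0)" if "n > 0" for n
    using that by (subst dirichlet_conv_eq_iff[where f = f, OF assms that])
      (simp add: dirichlet_inverse_rec.simps)
  then show "dirichlet_inverse_rec f 0 = 0 \<and>
      (\<forall>n>0. dirichlet_conv f (dirichlet_inverse_rec f) n = (if n = 1 then 1 else 0))"
    by (simp add: dirichlet_inverse_rec.simps)
  fix g
  assume g: "g 0 = 0 \<and> (\<forall>n>0. dirichlet_conv f g n = (if n = 1 then 1 else 0))"
  show "g = dirichlet_inverse_rec f"
  proof
    fix n
    show "g n = dirichlet_inverse_rec f n"
      using g rec dirichlet_inverse_unique[where f = f, OF assms, of g "dirichlet_inverse_rec f" n]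
      by (cases "n = 0") (simp_all add: dirichlet_inverse_rec.simps)
  qed
qed

lemma dirichlet_conv_inverse:
  assumes "f 1 = 1" and "n > 0"
  shows "dirichlet_conv f (dirichlet_inverse f) n = (if n = 1 then 1 else 0)"
  using assms by (subst dirichlet_conv_eq_iff)
    (simp_all add: dirichlet_inverse_eq_rec dirichlet_inverse_rec.simps)

lemma dirichlet_inverse_one:
  assumes "f 1 = 1"
  shows "dirichlet_inverse f 1 = 1"
  using assms by (simp add: dirichlet_inverse_eq_rec dirichlet_inverse_rec.simps)

lemma dirichlet_inverse_eq_neg_sum:
  assumes "f 1 = 1" and "n > 1"
  shows "dirichlet_inverse f n = - (\<Sum>d | d dvd n \<and> d < n. f (n div d) * dirichlet_inverse f d)"
  using assms by (subst dirichlet_inverse_eq_rec, simp, subst dirichlet_inverse_rec.simps)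
    (simp add: dirichlet_inverse_eq_rec)

lemma gcd_mult_divisors_coprime:
  fixes m n a b :: nat
  assumes "coprime m n" "a dvd m" "b dvd n"
  shows "gcd (a * b) m = a"
  using assms by (metis coprime_mult_right_iff dvd_mult_div_cancel
      gcd_mult_left_right_cancel gcd_nat.order_iff)

lemma sum_divisors_mult_coprime:
  fixes F :: "nat \<Rightarrow> 'a::comm_monoid_add"
  assumes "coprime m n"
  shows "(\<Sum>d | d dvd m * n. F d) = (\<Sum>(a, b) \<in> {a. a dvd m} \<times> {b. b dvd n}. F (a * b))"
proof (rule sum.reindex_bij_witness[of _ "\<lambda>(a, b). a * b" "\<lambda>d. (gcd d m, gcd d n)"])
  fix d assume "d \<in> {d. d dvd m * n}"
  then obtain a b where "d = a * b" "a dvd m" "b dvd n" by (auto elim: dvd_productE)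
  then show "(case (gcd d m, gcd d n) of (a, b) \<Rightarrow> a * b) = d"
    "(gcd d m, gcd d n) \<in> {a. a dvd m} \<times> {b. b dvd n}"
    "(case (gcd d m, gcd d n) of (a, b) \<Rightarrow> F (a * b)) = F d"
    using gcd_mult_divisors_coprime[OF assms] gcd_mult_divisors_coprime[of n m b a] assms
    by (auto simp: coprime_commute mult.commute)
next
  fix ab assume "ab \<in> {a. a dvd m} \<times> {b. b dvd n}"
  then obtain a b where "ab = (a, b)" "a dvd m" "b dvd n" by auto
  then show "(gcd (case ab of (a, b) \<Rightarrow> a * b) m, gcd (case ab of (a, b) \<Rightarrow> a * b) n) = ab"
    "(case ab of (a, b) \<Rightarrow> a * b) \<in> {d. d dvd m * n}"
    using gcd_mult_divisors_coprime[OF assms] gcd_mult_divisors_coprime[of n m b a] assms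
    by (auto simp: coprime_commute mult.commute mult_dvd_mono)
qed

lemma dirichlet_conv_mult_coprime:
  assumes "multiplicative_fun f" "coprime m n" "m > 0" "n > 0"
  shows "dirichlet_conv f g (m * n) =
    (\<Sum>(a, b) \<in> {a. a dvd m} \<times> {b. b dvd n}. f (m div a) * f (n div b) * g (a * b))"
  unfolding dirichlet_conv_def sum_divisors_mult_coprime[OF assms(2)]
proof (intro sum.cong refl, clarify)
  fix a b assume ab: "a dvd m" "b dvd n"
  then have "coprime (m div a) (n div b)"
    using assms(2) by (metis coprime_divisors dvd_div_mult_self dvd_triv_left)
  moreover have "m div a > 0" "n div b > 0"
    using ab assms(3,4) by (auto elim!: dvdE)
  moreover have "m * n div (a * b) = m div a * (n div b)"
    using ab by (simp add: div_mult_div_if_dvd)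
  ultimately show "f (m * n div (a * b)) * g (a * b) = f (m div a) * f (n div b) * g (a * b)"
    using assms(1) by (simp add: multiplicative_fun_def)
qed

lemma dirichlet_conv_mult_dirichlet_conv:
  "dirichlet_conv f g m * dirichlet_conv f h n =
    (\<Sum>(a, b) \<in> {a. a dvd m} \<times> {b. b dvd n}. f (m div a) * f (n div b) * (g a * h b))"
  unfolding dirichlet_conv_def sum_product sum.cartesian_product
  by (intro sum.cong refl) (auto simp: mult_ac)

(* Only the top term (a, b) = (m, n) of the two double sums can differ. *)
lemma dirichlet_conv_mult_coprime_diff:
  assumes f: "multiplicative_fun f" and mn: "coprime m n" "m > 0" "n > 0"
    and g: "\<And>a b. a dvd m \<Longrightarrow> b dvd n \<Longrightarrow> (a, b) \<noteq> (m, n) \<Longrightarrow> g (a * b) = g a * g b"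
  shows "dirichlet_conv f g (m * n) - dirichlet_conv f g m * dirichlet_conv f g n
    = g (m * n) - g m * g n"
proof -
  define P where "P = {a. a dvd m} \<times> {b. b dvd n}"
  define H where "H = (\<lambda>(a, b). f (m div a) * f (n div b) * g (a * b))"
  define K where "K = (\<lambda>(a, b). f (m div a) * f (n div b) * (g a * g b))"
  have "f 1 = 1" using f by (simp add: multiplicative_fun_def)
  have "H x - K x = (if x = (m, n) then g (m * n) - g m * g n else 0)" if x: "x \<in> P" for x
  proof -
    obtain a b where "x = (a, b)" "a dvd m" "b dvd n" using x by (auto simp: P_def)
    then show ?thesis
      using g[of a b] mn \<open>f 1 = 1\<close> by (cases "(a, b) = (m, n)") (auto simp: H_def K_def)
  qed
  moreover have "finite P" "(m, n) \<in> P" using mn by (auto simp: P_def)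
  ultimately have "sum H P - sum K P = g (m * n) - g m * g n"
    by (simp add: sum_subtractf[symmetric] sum.delta)
  moreover have "sum H P = dirichlet_conv f g (m * n)"
    using dirichlet_conv_mult_coprime[OF f mn] by (simp add: H_def P_def)
  moreover have "sum K P = dirichlet_conv f g m * dirichlet_conv f g n"
    by (simp add: dirichlet_conv_mult_dirichlet_conv K_def P_def)
  ultimately show ?thesis by simp
qed

lemma multiplicative_dirichlet_inverse:
  assumes f: "multiplicative_fun f"
  shows "multiplicative_fun (dirichlet_inverse f)"
proof -
  define g where "g = dirichlet_inverse f"
  have f1: "f 1 = 1" using f by (simp add: multiplicative_fun_def)
  have "g (m * n) = g m * g n" if "m > 0" "n > 0" "coprime m n" for m n
    using that
  proof (induction "m * n" arbitrary: m n rule: less_induct)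
    case less
    consider "m = 1 \<or> n = 1" | "m > 1" "n > 1" using less.prems by linarith
    then show ?case
    proof cases
      case 1
      then show ?thesis using dirichlet_inverse_one[of f] f1 by (auto simp: g_def)
    next
      case 2
      have "g (a * b) = g a * g b" if ab: "a dvd m" "b dvd n" "(a, b) \<noteq> (m, n)" for a b
      proof -
        have "a > 0" "b > 0" "a \<le> m" "b \<le> n"
          using ab less.prems by (auto intro: Nat.gr0I dvd_imp_le)
        then have "a * b < m * n"
          using ab(3) by (metis le_neq_implies_less mult_le_less_imp_less mult_less_le_imp_less nless_le)
        moreover have "coprime a b" using ab less.prems(3) coprime_divisors by blast
        ultimately show ?thesis using less.hyps \<open>a > 0\<close> \<open>b > 0\<close> by blast
      qed
      then have "dirichlet_conv f g (m * n) - dirichlet_conv f g m * dirichlet_conv f g n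
          = g (m * n) - g m * g n"
        using dirichlet_conv_mult_coprime_diff[OF f less.prems(3,1,2)] by blast
      then show ?thesis
        using 2 dirichlet_conv_inverse[of f] f1 by (simp add: g_def)
    qed
  qed
  then show ?thesis
    using f1 dirichlet_inverse_one[of f] by (simp add: multiplicative_fun_def g_def)
qed

lemma prime_power_coprime_induct [consumes 1, case_names one prime_power coprime]:
  fixes n :: nat
  assumes "n > 0"
    and one: "P 1"
    and prime_power: "\<And>p k. prime p \<Longrightarrow> k > 0 \<Longrightarrow> P (p ^ k)"
    and coprime: "\<And>a b. a > 1 \<Longrightarrow> b > 1 \<Longrightarrow> coprime a b \<Longrightarrow> P a \<Longrightarrow> P b \<Longrightarrow> P (a * b)"
  shows "P n"
  using \<open>n > 0\<close>
proof (induction n rule: less_induct)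
  case (less n)
  show ?case
  proof (cases "n = 1")
    case True
    then show ?thesis using one by simp
  next
    case False
    then obtain p where p: "prime p" "p dvd n" using prime_factor_nat by blast
    have "multiplicity p n > 0" using p less.prems by (simp add: prime_multiplicity_gt_zero_iff)
    moreover obtain k where "n = p ^ multiplicity p n * k" "\<not> p dvd k"
      using multiplicity_decompose'[of n p] less.prems p(1) not_prime_unit by blast
    ultimately obtain e k where k: "n = p ^ e * k" "\<not> p dvd k" and e: "e > 0" by blast
    then have pe: "p ^ e > 1" using p(1) prime_gt_1_nat one_less_power by blast
    have "k > 0" using k less.prems by (auto intro: Nat.gr0I)
    show ?thesis
    proof (cases "k = 1")
      case True
      then show ?thesis using k prime_power[OF p(1) e] by simp
    next
      case False
      with \<open>k > 0\<close> have "k > 1" by simp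
      moreover have "coprime (p ^ e) k"
        using prime_imp_coprime[OF p(1) k(2)] by simp
      moreover have "p ^ e < n" "k < n"
        using k pe \<open>k > 1\<close> p(1) prime_gt_0_nat by simp_all
      ultimately show ?thesis using coprime[OF pe] less.IH pe k(1) by simp
    qed
  qed
qed

lemma multiplicative_abs_le_powr:
  assumes g: "multiplicative_fun g"
    and g_prime_power: "\<And>p k. prime p \<Longrightarrow> k > 0 \<Longrightarrow> \<bar>g (p ^ k)\<bar> \<le> real (p ^ k) powr \<alpha>"
    and "n > 0"
  shows "\<bar>g n\<bar> \<le> real n powr \<alpha>"
  using \<open>n > 0\<close>
proof (induction n rule: prime_power_coprime_induct)
  case one
  then show ?case using g by (simp add: multiplicative_fun_def)
next
  case (prime_power p k)
  then show ?case by (rule g_prime_power)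
next
  case (coprime a b)
  then have "\<bar>g (a * b)\<bar> = \<bar>g a\<bar> * \<bar>g b\<bar>"
    using g by (simp add: multiplicative_fun_def abs_mult)
  also have "\<dots> \<le> real a powr \<alpha> * real b powr \<alpha>"
    using coprime by (intro mult_mono) auto
  also have "\<dots> = real (a * b) powr \<alpha>" by (simp add: powr_mult)
  finally show ?case .
qed

lemma proper_divisors_prime_power:
  assumes "prime (p :: nat)"
  shows "{d. d dvd p ^ k \<and> d < p ^ k} = (\<lambda>i. p ^ i) ` {..<k}"
  using assms prime_gt_1_nat[OF assms]
  by (auto simp: divides_primepow_nat power_strict_increasing_iff)

lemma mult_le_power:
  fixes p j :: nat
  assumes "p \<ge> 2"
  shows "j * p \<le> p ^ j"
proof (cases j)
  case (Suc i)
  have "Suc i \<le> 2 ^ i" using less_exp[of i] by (cases i) auto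
  also have "\<dots> \<le> p ^ i" using assms by (simp add: power_mono)
  finally have "Suc i * p \<le> p ^ i * p" by (rule mult_le_mono1)
  then show ?thesis using Suc by (simp add: mult.commute)
qed simp

lemma dirichlet_inverse_prime_power:
  assumes "f 1 = 1" "prime p" "k > 0"
  shows "dirichlet_inverse f (p ^ k) =
    - (\<Sum>i<k. f (p ^ (k - i)) * dirichlet_inverse f (p ^ i))"
proof -
  have "p ^ k > 1" using assms prime_gt_1_nat one_less_power by blast
  then have "dirichlet_inverse f (p ^ k) =
      - (\<Sum>i<k. f (p ^ k div p ^ i) * dirichlet_inverse f (p ^ i))"
    using dirichlet_inverse_eq_neg_sum[of f "p ^ k"] assms prime_gt_1_nat[OF assms(2)]
    by (simp add: proper_divisors_prime_power[OF assms(2)] sum.reindex inj_on_def power_inject_exp)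
  also have "(\<Sum>i<k. f (p ^ k div p ^ i) * dirichlet_inverse f (p ^ i))
      = (\<Sum>i<k. f (p ^ (k - i)) * dirichlet_inverse f (p ^ i))"
    using prime_gt_0_nat[OF assms(2)] by (intro sum.cong) (auto simp: power_diff)
  finally show ?thesis .
qed

lemma abs_dirichlet_inverse_prime_power_le:
  fixes f :: "nat \<Rightarrow> real"
  assumes f1: "f 1 = 1" and "A \<ge> 0" "0 \<le> c" "c \<le> 1"
    and f_le: "\<And>n. n \<ge> 2 \<Longrightarrow> \<bar>f n\<bar> \<le> A * c ^ n"
    and p: "prime p"
  shows "\<bar>dirichlet_inverse f (p ^ k)\<bar> \<le> (1 + A) ^ k * c ^ (k * p)"
proof (induction k rule: less_induct)
  case (less k)
  have p2: "p \<ge> 2" using prime_ge_2_nat[OF p] .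
  show ?case
  proof (cases "k = 0")
    case True
    then show ?thesis using dirichlet_inverse_one[of f] f1 by simp
  next
    case False
    have term_le: "\<bar>f (p ^ (k - i))\<bar> * \<bar>dirichlet_inverse f (p ^ i)\<bar>
        \<le> c ^ (k * p) * (A * (1 + A) ^ i)" if "i < k" for i
    proof -
      have "p ^ (k - i) \<ge> 2" using that p2 self_le_power[of p "k - i"] by simp
      then have "\<bar>f (p ^ (k - i))\<bar> \<le> A * c ^ (p ^ (k - i))" using f_le by simp
      also have "\<dots> \<le> A * c ^ ((k - i) * p)"
        using mult_le_power[OF p2] assms by (intro mult_left_mono power_decreasing) auto
      finally have "\<bar>f (p ^ (k - i))\<bar> * \<bar>dirichlet_inverse f (p ^ i)\<bar>
          \<le> A * c ^ ((k - i) * p) * ((1 + A) ^ i * c ^ (i * p))"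
        using less.IH[OF that] assms by (intro mult_mono) auto
      also have "\<dots> = A * (1 + A) ^ i * c ^ ((k - i) * p + i * p)"
        by (simp add: power_add)
      also have "(k - i) * p + i * p = k * p"
        using that by (simp add: add_mult_distrib[symmetric])
      finally show ?thesis by (simp add: mult_ac)
    qed
    have "\<bar>dirichlet_inverse f (p ^ k)\<bar>
        \<le> (\<Sum>i<k. \<bar>f (p ^ (k - i))\<bar> * \<bar>dirichlet_inverse f (p ^ i)\<bar>)"
      using dirichlet_inverse_prime_power[of f p k] f1 p False
      by (simp add: abs_mult order_trans[OF sum_abs] del: sum.lessThan_Suc)
    also have "\<dots> \<le> c ^ (k * p) * (\<Sum>i<k. A * (1 + A) ^ i)"
      unfolding sum_distrib_left by (intro sum_mono) (use term_le in auto)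
    also have "(\<Sum>i<k. A * (1 + A) ^ i) = (1 + A) ^ k - 1"
      by (induction k) (auto simp: algebra_simps)
    also have "c ^ (k * p) * ((1 + A) ^ k - 1) \<le> (1 + A) ^ k * c ^ (k * p)"
      using \<open>0 \<le> c\<close> by (simp add: algebra_simps)
    finally show ?thesis .
  qed
qed

lemma cube_le_three_power: "(n :: nat) ^ 3 \<le> 3 ^ n"
proof (cases "n \<ge> 3")
  case True
  then show ?thesis
  proof (induction n rule: nat_induct_at_least)
    case (Suc n)
    have "(Suc n) ^ 3 = n ^ 3 + 3 * n ^ 2 + 3 * n + 1"
      by (simp add: power2_eq_square power3_eq_cube algebra_simps)
    also have "\<dots> \<le> 3 * n ^ 3"
    proof -
      have "3 * n ^ 2 \<le> n ^ 3" "3 * n \<le> n ^ 2" "1 \<le> n ^ 2"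
        using Suc.hyps by (simp_all add: power2_eq_square power3_eq_cube)
      then show ?thesis by linarith
    qed
    also have "\<dots> \<le> 3 * 3 ^ n" using Suc.IH by simp
    finally show ?case by simp
  qed simp
next
  case False
  then have "n \<in> {0, 1, 2}" by auto
  then show ?thesis by auto
qed

lemma power_le_powr_three:
  fixes c :: real and n :: nat
  assumes "0 < c" "c \<le> 1" "n > 0"
  shows "c ^ n \<le> real n powr (3 * ln c / ln 3)"
proof -
  have "ln (real n ^ 3) \<le> ln (3 ^ n)"
    using cube_le_three_power[of n] assms(3) by (simp del: of_nat_power add: of_nat_power[symmetric])
  then have "3 * ln (real n) \<le> real n * ln 3" using assms(3) by (simp add: ln_realpow)
  moreover have "ln c / ln 3 \<le> 0" using assms(1,2) by (simp add: divide_nonpos_pos)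
  ultimately have "real n * ln 3 * (ln c / ln 3) \<le> 3 * ln (real n) * (ln c / ln 3)"
    by (rule mult_right_mono_neg)
  then have "exp (real n * ln c) \<le> exp (3 * ln c / ln 3 * ln (real n))" by (simp add: mult_ac)
  then show ?thesis using assms by (simp add: powr_def exp_of_nat_mult)
qed

lemma le_powr_ln_div_ln2:
  fixes x y :: real
  assumes "1 \<le> x" "2 \<le> y"
  shows "x \<le> y powr (ln x / ln 2)"
proof -
  have "ln x / ln 2 * ln 2 \<le> ln x / ln 2 * ln y"
    using assms by (intro mult_left_mono) auto
  then have "exp (ln x) \<le> exp (ln x / ln 2 * ln y)" by simp
  then show ?thesis using assms by (simp add: powr_def)
qed

theorem corollary3p7:
  fixes f :: "nat \<Rightarrow> real" and A c :: real
  assumes "multiplicative_fun f"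
    and "A > 0" and "0 < c" and "c < 1"
    and "\<And>n. n \<ge> 2 \<Longrightarrow> \<bar>f n\<bar> \<le> A * c ^ n"
  shows "\<forall>n\<ge>2. \<bar>dirichlet_inverse f n\<bar>
           \<le> real n powr (3 * ln c / ln 3 + ln (1 + A) / ln 2)"
proof -
  define \<alpha> where "\<alpha> = 3 * ln c / ln 3 + ln (1 + A) / ln 2"
  have "\<bar>dirichlet_inverse f (p ^ k)\<bar> \<le> real (p ^ k) powr \<alpha>" if p: "prime p" for p k
  proof -
    have p2: "p \<ge> 2" using prime_ge_2_nat[OF p] .
    have "(1 + A) * c ^ p \<le> real p powr (ln (1 + A) / ln 2) * real p powr (3 * ln c / ln 3)"
      using le_powr_ln_div_ln2[of "1 + A" p] power_le_powr_three[of c p] p2 assms(2-4)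
      by (intro mult_mono) auto
    then have base: "(1 + A) * c ^ p \<le> real p powr \<alpha>"
      by (simp add: \<alpha>_def powr_add mult.commute)
    have "\<bar>dirichlet_inverse f (p ^ k)\<bar> \<le> (1 + A) ^ k * c ^ (k * p)"
      using abs_dirichlet_inverse_prime_power_le[of f A c p k] assms p
      by (simp add: multiplicative_fun_def)
    also have "\<dots> = ((1 + A) * c ^ p) ^ k"
      by (simp add: power_mult_distrib power_mult[symmetric] mult.commute)
    also have "\<dots> \<le> (real p powr \<alpha>) ^ k" using base assms(2,3) by (intro power_mono) auto
    also have "\<dots> = real (p ^ k) powr \<alpha>"
      using p2 by (simp add: powr_realpow[symmetric] powr_powr mult.commute)
    finally show ?thesis .
  qed
  then show ?thesis
    using multiplicative_abs_le_powr[OF multiplicative_dirichlet_inverse[OF assms(1)]]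
    unfolding \<alpha>_def by auto
qed

end
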